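(* The cone of (coarse) Hilbert functions of finitely generated squarefree $\mathbb{N}^n$-graded $S$-modules generated in degree zero equals the cone of (coarse) Hilbert functions of Stanley–Reisner rings $\mathbb{k}[\Delta]=S/I_\Delta$ of simplicial complexes $\Delta$ on $[n]$.
   Context: $S=\mathbb{k}[x_1,\dots,x_n]$ with fine $\mathbb{N}^n$-grading. A module $M$ is squarefree if for all $a\in\mathbb{N}^n$ and $i$ with $a_i\neq0$, multiplication by $x_i:M_a\to M_{a+e_i}$ is bijective. The coarse Hilbert function is $H_M(i)=\dim_{\mathbb{k}}\bigoplus_{|a|=i}M_a$. The cone of Hilbert functions of a family of modules is the convex cone in $\mathbb{R}^{\mathbb{N}}$ spanned by their Hilbert functions. *)

theory Defs
  imports "Jordan_Normal_Form.Matrix"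
begin

text \<open>Fine-graded modules over S = k[x_0,...,x_{n-1}] are encoded as families of
finite-dimensional k-vector spaces M_a = k^(dimf M a), a in N^n, together with the linear
maps x_i : M_a -> M_{a+e_i} (given as matrices) which pairwise commute.\<close>

record 'k grmod =
  dimf :: "(nat \<Rightarrow> nat) \<Rightarrow> nat"
  mulx :: "nat \<Rightarrow> (nat \<Rightarrow> nat) \<Rightarrow> 'k mat"

definition degrees :: "nat \<Rightarrow> (nat \<Rightarrow> nat) set" where
  "degrees n = {a. \<forall>i\<ge>n. a i = 0}"

definition shift :: "(nat \<Rightarrow> nat) \<Rightarrow> nat \<Rightarrow> (nat \<Rightarrow> nat)" where
  "shift a i = a(i := a i + 1)"

definition graded_module :: "nat \<Rightarrow> 'k::field grmod \<Rightarrow> bool" where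
  "graded_module n M \<longleftrightarrow>
     (\<forall>a\<in>degrees n. \<forall>i<n. mulx M i a \<in> carrier_mat (dimf M (shift a i)) (dimf M a)) \<and>
     (\<forall>a\<in>degrees n. \<forall>i<n. \<forall>j<n.
        mulx M j (shift a i) * mulx M i a = mulx M i (shift a j) * mulx M j a)"

definition squarefree_mod :: "nat \<Rightarrow> 'k::field grmod \<Rightarrow> bool" where
  "squarefree_mod n M \<longleftrightarrow>
     (\<forall>a\<in>degrees n. \<forall>i<n. a i \<noteq> 0 \<longrightarrow>
        bij_betw (\<lambda>v. mulx M i a *\<^sub>v v) (carrier_vec (dimf M a)) (carrier_vec (dimf M (shift a i))))"

text \<open>The graded submodule generated by the degree-zero component M_0.\<close>
inductive gen0 :: "nat \<Rightarrow> 'k::field grmod \<Rightarrow> (nat \<Rightarrow> nat) \<Rightarrow> 'k vec \<Rightarrow> bool"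
  for n M where
  base: "v \<in> carrier_vec (dimf M (\<lambda>_. 0)) \<Longrightarrow> gen0 n M (\<lambda>_. 0) v"
| zero: "a \<in> degrees n \<Longrightarrow> gen0 n M a (0\<^sub>v (dimf M a))"
| add: "gen0 n M a v \<Longrightarrow> gen0 n M a w \<Longrightarrow> gen0 n M a (v + w)"
| smult: "gen0 n M a v \<Longrightarrow> gen0 n M a (c \<cdot>\<^sub>v v)"
| mult: "gen0 n M a v \<Longrightarrow> i < n \<Longrightarrow> gen0 n M (shift a i) (mulx M i a *\<^sub>v v)"

definition generated_in_degree_zero :: "nat \<Rightarrow> 'k::field grmod \<Rightarrow> bool" where
  "generated_in_degree_zero n M \<longleftrightarrow>
     (\<forall>a\<in>degrees n. \<forall>v\<in>carrier_vec (dimf M a). gen0 n M a v)"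

definition hilb :: "nat \<Rightarrow> 'k grmod \<Rightarrow> nat \<Rightarrow> real" where
  "hilb n M i = real (\<Sum>a\<in>{a\<in>degrees n. (\<Sum>j<n. a j) = i}. dimf M a)"

definition simplicial_complex :: "nat \<Rightarrow> nat set set \<Rightarrow> bool" where
  "simplicial_complex n \<Delta> \<longleftrightarrow> \<Delta> \<noteq> {} \<and> (\<forall>F\<in>\<Delta>. F \<subseteq> {0..<n}) \<and>
     (\<forall>F\<in>\<Delta>. \<forall>G. G \<subseteq> F \<longrightarrow> G \<in> \<Delta>)"

definition supp :: "(nat \<Rightarrow> nat) \<Rightarrow> nat set" where
  "supp a = {i. a i \<noteq> 0}"

text \<open>The Stanley--Reisner ring k[Delta] = S/I_Delta, with its monomial k-basis:
M_a = k if supp a is a face, 0 otherwise; x_i acts as identity between nonzero components.\<close>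
definition SR_dim :: "nat \<Rightarrow> nat set set \<Rightarrow> (nat \<Rightarrow> nat) \<Rightarrow> nat" where
  "SR_dim n \<Delta> a = (if a \<in> degrees n \<and> supp a \<in> \<Delta> then 1 else 0)"

definition stanley_reisner :: "nat \<Rightarrow> nat set set \<Rightarrow> 'k::field grmod" where
  "stanley_reisner n \<Delta> =
     \<lparr> dimf = SR_dim n \<Delta>,
       mulx = (\<lambda>i a. if SR_dim n \<Delta> a = 1 \<and> SR_dim n \<Delta> (shift a i) = 1 then 1\<^sub>m 1
                     else 0\<^sub>m (SR_dim n \<Delta> (shift a i)) (SR_dim n \<Delta> a)) \<rparr>"

definition cone_span :: "(nat \<Rightarrow> real) set \<Rightarrow> (nat \<Rightarrow> real) set" where
  "cone_span H = {f. \<exists>T c. finite T \<and> T \<subseteq> H \<and> (\<forall>h\<in>T. c h \<ge> 0) \<and>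
                        f = (\<lambda>i. \<Sum>h\<in>T. c h * h i)}"

end

theory Submission
  imports Defs "Jordan_Normal_Form.Determinant"
begin

text \<open>Stanley--Reisner rings are themselves squarefree modules generated in degree zero,
  which gives one inclusion. Conversely, let \<open>M\<close> be such a module. Generation in degree
  zero makes every \<open>x\<^sub>i : M\<^sub>a \<rightarrow> M\<^bsub>a+e\<^sub>i\<^esub>\<close> surjective, so \<open>dim M\<^sub>a\<close> decreases as \<open>a\<close> grows;
  squarefreeness makes it bijective when \<open>a\<^sub>i \<noteq> 0\<close>, so \<open>dim M\<^sub>a\<close> depends only on
  \<open>supp a\<close>. Hence \<open>\<Delta>\<^sub>t = {supp a | dim M\<^sub>a \<ge> t}\<close> is a simplicial complex for
  \<open>1 \<le> t \<le> dim M\<^sub>0\<close>, and \<open>dim M\<^sub>a\<close> is the number of these \<open>t\<close> with \<open>supp a \<in> \<Delta>\<^sub>t\<close>, i.e.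
  \<open>H\<^sub>M = H\<^bsub>k[\<Delta>\<^sub>1]\<^esub> + \<dots> + H\<^bsub>k[\<Delta>\<^sub>d]\<^esub>\<close> with \<open>d = dim M\<^sub>0\<close>.\<close>

section \<open>Linear maps between coordinate spaces\<close>

lemma mult_mat_vec_zero_vec:
  "A \<in> carrier_mat q p \<Longrightarrow> A *\<^sub>v 0\<^sub>v p = (0\<^sub>v q :: 'a::semiring_0 vec)"
  by (rule eq_vecI) (auto simp: scalar_prod_def)

lemma carrier_mat_degenerate_eq:
  "A \<in> carrier_mat r c \<Longrightarrow> B \<in> carrier_mat r c \<Longrightarrow> r = 0 \<or> c = 0 \<Longrightarrow> A = B"
  by (rule eq_matI) auto

lemma inj_on_mult_mat_vec_imp_le:
  fixes A :: "'k::field mat"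
  assumes A: "A \<in> carrier_mat q p"
    and inj: "inj_on (\<lambda>v. A *\<^sub>v v) (carrier_vec p)"
  shows "p \<le> q"
proof (rule ccontr)
  assume "\<not> p \<le> q"
  hence qp: "q < p" by simp
  \<comment> \<open>padding \<open>A\<close> with zero rows gives a singular square matrix with the same kernel\<close>
  define c where "c i = (if i < q then row A i else 0\<^sub>v p)" for i
  define B where "B = mat\<^sub>r p p (\<lambda>i. if i = p - 1 then 0\<^sub>v p else c i)"
  have B: "B \<in> carrier_mat p p" unfolding B_def by auto
  have "det B = 0"
    unfolding B_def by (rule det_row_0) (use qp A in \<open>auto simp: c_def\<close>)
  then obtain v where v: "v \<in> carrier_vec p" "v \<noteq> 0\<^sub>v p" "B *\<^sub>v v = 0\<^sub>v p"
    using det_0_iff_vec_prod_zero_field[OF B] by blast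
  have "A *\<^sub>v v = 0\<^sub>v q"
  proof (rule eq_vecI)
    fix i assume "i < dim_vec (0\<^sub>v q :: 'k vec)"
    hence i: "i < q" by simp
    have "row A i \<bullet> v = (B *\<^sub>v v) $ i"
      using i qp A unfolding B_def c_def by (auto simp: mult_mat_vec_def)
    thus "(A *\<^sub>v v) $ i = 0\<^sub>v q $ i" using i qp A v(3) by simp
  qed (use A in auto)
  hence "A *\<^sub>v v = A *\<^sub>v 0\<^sub>v p" using A by (simp add: mult_mat_vec_zero_vec)
  with inj v show False by (auto dest: inj_onD)
qed

lemma surj_mult_mat_vec_imp_le:
  fixes A :: "'k::field mat"
  assumes A: "A \<in> carrier_mat q p"
    and surj: "carrier_vec q \<subseteq> (\<lambda>u. A *\<^sub>v u) ` carrier_vec p"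
  shows "q \<le> p"
proof -
  have "\<forall>j\<in>{..<q}. \<exists>u\<in>carrier_vec p. A *\<^sub>v u = unit_vec q j"
    using surj by (metis imageE lessThan_iff subsetD unit_vec_carrier)
  then obtain u where u: "\<And>j. j < q \<Longrightarrow> u j \<in> carrier_vec p \<and> A *\<^sub>v u j = unit_vec q j"
    by (metis lessThan_iff)
  define B where "B = mat_of_cols p (map u [0..<q])"
  have B: "B \<in> carrier_mat p q" unfolding B_def by auto
  have AB: "A * B = 1\<^sub>m q"
  proof (rule eq_matI)
    fix i j assume "i < dim_row (1\<^sub>m q :: 'k mat)" "j < dim_col (1\<^sub>m q :: 'k mat)"
    hence i: "i < q" and j: "j < q" by auto
    have "(A * B) $$ (i, j) = (A *\<^sub>v col B j) $ i" using i j A B by simp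
    also have "\<dots> = (A *\<^sub>v u j) $ i" using j u unfolding B_def by simp
    finally show "(A * B) $$ (i, j) = 1\<^sub>m q $$ (i, j)" using i j u by simp
  qed (use A B in auto)
  have "inj_on (\<lambda>v. B *\<^sub>v v) (carrier_vec q)"
  proof (rule inj_onI)
    fix v w :: "'k vec" assume v: "v \<in> carrier_vec q" and w: "w \<in> carrier_vec q"
      and "B *\<^sub>v v = B *\<^sub>v w"
    hence "(A * B) *\<^sub>v v = (A * B) *\<^sub>v w" using A B by (simp add: assoc_mult_mat_vec)
    thus "v = w" using AB v w by simp
  qed
  thus ?thesis by (rule inj_on_mult_mat_vec_imp_le[OF B])
qed

lemma bij_betw_mult_mat_vec_imp_eq:
  fixes A :: "'k::field mat"
  assumes "A \<in> carrier_mat q p"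
    and "bij_betw (\<lambda>v. A *\<^sub>v v) (carrier_vec p) (carrier_vec q)"
  shows "p = q"
proof (rule antisym)
  show "p \<le> q" by (rule inj_on_mult_mat_vec_imp_le[OF assms(1) bij_betw_imp_inj_on[OF assms(2)]])
  show "q \<le> p" by (rule surj_mult_mat_vec_imp_le[OF assms(1)]) (simp add: bij_betw_imp_surj_on[OF assms(2)])
qed

lemma cone_span_mono: "A \<subseteq> B \<Longrightarrow> cone_span A \<subseteq> cone_span B"
  unfolding cone_span_def by blast

lemma cone_span_base: "h \<in> H \<Longrightarrow> h \<in> cone_span H"
  unfolding cone_span_def by (intro CollectI exI[of _ "{h}"] exI[of _ "\<lambda>_. 1"]) auto

lemma cone_span_zero: "(\<lambda>_. 0) \<in> cone_span H"
  unfolding cone_span_def by (intro CollectI exI[of _ "{}"]) auto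

lemma cone_span_scale:
  assumes "c \<ge> 0" "f \<in> cone_span H"
  shows "(\<lambda>i. c * f i) \<in> cone_span H"
proof -
  obtain T d where "finite T" "T \<subseteq> H" "\<forall>h\<in>T. d h \<ge> 0" "f = (\<lambda>i. \<Sum>h\<in>T. d h * h i)"
    using assms(2) unfolding cone_span_def by auto
  thus ?thesis unfolding cone_span_def
    by (intro CollectI exI[of _ T] exI[of _ "\<lambda>h. c * d h"])
       (use assms(1) in \<open>auto simp: sum_distrib_left mult.assoc\<close>)
qed

lemma cone_span_add:
  assumes "f \<in> cone_span H" "g \<in> cone_span H"
  shows "(\<lambda>i. f i + g i) \<in> cone_span H"
proof -
  obtain T1 c1 where T1: "finite T1" "T1 \<subseteq> H" "\<forall>h\<in>T1. c1 h \<ge> 0" "f = (\<lambda>i. \<Sum>h\<in>T1. c1 h * h i)"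
    using assms(1) unfolding cone_span_def by auto
  obtain T2 c2 where T2: "finite T2" "T2 \<subseteq> H" "\<forall>h\<in>T2. c2 h \<ge> 0" "g = (\<lambda>i. \<Sum>h\<in>T2. c2 h * h i)"
    using assms(2) unfolding cone_span_def by auto
  define c where "c h = (if h \<in> T1 then c1 h else 0) + (if h \<in> T2 then c2 h else 0)" for h
  have restrict: "(\<Sum>h\<in>T1 \<union> T2. (if h \<in> S then d h else 0) * h i) = (\<Sum>h\<in>S. d h * h i)"
    if "S \<subseteq> T1 \<union> T2" for S d i
    by (rule sum.mono_neutral_cong_right) (use that T1(1) T2(1) in auto)
  have "(\<lambda>i. f i + g i) = (\<lambda>i. \<Sum>h\<in>T1 \<union> T2. c h * h i)"
    unfolding c_def T1(4) T2(4) distrib_right sum.distrib by (simp add: restrict)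
  thus ?thesis unfolding cone_span_def
    by (intro CollectI exI[of _ "T1 \<union> T2"] exI[of _ c]) (use T1 T2 in \<open>auto simp: c_def\<close>)
qed

lemma cone_span_sum:
  assumes "finite I" "\<And>t. t \<in> I \<Longrightarrow> g t \<in> cone_span H"
  shows "(\<lambda>i. \<Sum>t\<in>I. g t i) \<in> cone_span H"
  using assms by (induction I rule: finite_induct) (auto intro: cone_span_zero cone_span_add)

lemma cone_span_idem: "cone_span (cone_span H) = cone_span H"
proof
  show "cone_span (cone_span H) \<subseteq> cone_span H"
  proof
    fix f assume "f \<in> cone_span (cone_span H)"
    then obtain T c where T: "finite T" "T \<subseteq> cone_span H" "\<forall>h\<in>T. c h \<ge> 0"
      and f: "f = (\<lambda>i. \<Sum>h\<in>T. c h * h i)"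
      unfolding cone_span_def by auto
    show "f \<in> cone_span H" unfolding f
      using T by (intro cone_span_sum cone_span_scale) auto
  qed
qed (rule subsetI, rule cone_span_base)

definition unshift :: "(nat \<Rightarrow> nat) \<Rightarrow> nat \<Rightarrow> (nat \<Rightarrow> nat)" where
  "unshift a i = a(i := a i - 1)"

lemma shift_unshift [simp]: "a i \<noteq> 0 \<Longrightarrow> shift (unshift a i) i = a"
  unfolding shift_def unshift_def by auto

lemma unshift_shift [simp]: "unshift (shift a i) i = a"
  unfolding shift_def unshift_def by auto

lemma unshift_shift_commute: "i \<noteq> j \<Longrightarrow> unshift (shift a j) i = shift (unshift a i) j"
  unfolding shift_def unshift_def by (auto simp: fun_eq_iff)

lemma shift_commute: "shift (shift a i) j = shift (shift a j) i"
  unfolding shift_def by (auto simp: fun_eq_iff)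

lemma shift_apply: "shift a i j = (if j = i then a i + 1 else a j)"
  unfolding shift_def by simp

lemma zero_in_degrees: "(\<lambda>_. 0) \<in> degrees n"
  unfolding degrees_def by simp

lemma shift_in_degrees: "a \<in> degrees n \<Longrightarrow> i < n \<Longrightarrow> shift a i \<in> degrees n"
  unfolding shift_def degrees_def by auto

lemma unshift_in_degrees: "a \<in> degrees n \<Longrightarrow> unshift a i \<in> degrees n"
  unfolding unshift_def degrees_def by auto

lemma shift_in_degreesD: "shift a i \<in> degrees n \<Longrightarrow> a \<in> degrees n"
  by (metis unshift_in_degrees unshift_shift)

lemma supp_shift: "supp (shift a i) = insert i (supp a)"
  unfolding supp_def shift_def by auto

lemma interval_induct_degrees [consumes 3, case_names base step]:
  assumes a: "a \<in> degrees n" and b: "b \<in> degrees n" and "a \<le> b"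
    and base: "P a"
    and step: "\<And>c i. c \<in> degrees n \<Longrightarrow> i < n \<Longrightarrow> a \<le> c \<Longrightarrow> shift c i \<le> b \<Longrightarrow> P c
                 \<Longrightarrow> P (shift c i)"
  shows "P b"
proof -
  have "P e" if "e \<in> degrees n" "a \<le> e" "e \<le> b" for e
    using that
  proof (induction "\<Sum>j<n. e j - a j" arbitrary: e rule: less_induct)
    case (less e)
    show ?case
    proof (cases "e = a")
      case True
      with base show ?thesis by simp
    next
      case False
      then obtain i where ne: "e i \<noteq> a i" by auto
      have "a i \<le> e i" using less.prems(2) by (simp add: le_fun_def)
      moreover have "i < n"
        using ne a less.prems(1) unfolding degrees_def by (cases "i < n") auto
      ultimately have i: "i < n" "a i < e i" using ne by auto
      define c where "c = unshift e i"
      have e: "e = shift c i" using i unfolding c_def by simp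
      have "c \<le> e" unfolding c_def unshift_def le_fun_def by simp
      have c: "c \<in> degrees n" "a \<le> c" "c \<le> b"
        using unshift_in_degrees[OF less.prems(1)] less.prems(2) i(2)
          order_trans[OF \<open>c \<le> e\<close> less.prems(3)]
        unfolding c_def by (auto simp: unshift_def le_fun_def)
      have "(\<Sum>j<n. c j - a j) < (\<Sum>j<n. e j - a j)"
        using i unfolding c_def unshift_def
        by (intro sum_strict_mono_ex1) auto
      with less.hyps c have "P c" by blast
      with step c i less.prems show ?thesis unfolding e by blast
    qed
  qed
  with b \<open>a \<le> b\<close> show ?thesis by blast
qed

section \<open>Squarefree modules generated in degree zero\<close>

lemma graded_module_mulx_carrier:
  "graded_module n M \<Longrightarrow> a \<in> degrees n \<Longrightarrow> i < n
    \<Longrightarrow> mulx M i a \<in> carrier_mat (dimf M (shift a i)) (dimf M a)"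
  unfolding graded_module_def by blast

lemma graded_module_mulx_commute_vec:
  assumes G: "graded_module n M" and a: "a \<in> degrees n" and i: "i < n" and j: "j < n"
    and u: "u \<in> carrier_vec (dimf M a)"
  shows "mulx M j (shift a i) *\<^sub>v (mulx M i a *\<^sub>v u) = mulx M i (shift a j) *\<^sub>v (mulx M j a *\<^sub>v u)"
proof -
  have "mulx M j (shift a i) * mulx M i a = mulx M i (shift a j) * mulx M j a"
    using G a i j unfolding graded_module_def by blast
  moreover note carriers = graded_module_mulx_carrier[OF G]
  ultimately show ?thesis
    using carriers[OF a i] carriers[OF shift_in_degrees[OF a i] j]
      carriers[OF a j] carriers[OF shift_in_degrees[OF a j] i] u
    by (metis assoc_mult_mat_vec)
qed

lemma graded_module_mulx_unshift_carrier:
  assumes "graded_module n M" "a \<in> degrees n" "i < n" "a i \<noteq> 0"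
  shows "mulx M i (unshift a i) \<in> carrier_mat (dimf M a) (dimf M (unshift a i))"
  using graded_module_mulx_carrier[OF assms(1) unshift_in_degrees[OF assms(2), of i] assms(3)]
  by (simp only: shift_unshift[of a i, OF assms(4)])

lemma gen0_carrier:
  assumes G: "graded_module n M" and "gen0 n M a v"
  shows "a \<in> degrees n \<and> v \<in> carrier_vec (dimf M a)"
  using assms(2)
  by induction
     (auto simp: zero_in_degrees shift_in_degrees intro: mult_mat_vec_carrier graded_module_mulx_carrier[OF G])

lemma gen0_in_image_mulx:
  fixes M :: "'k::field grmod"
  assumes G: "graded_module n M" and "gen0 n M b v" and "i < n" and "b i \<noteq> 0"
  shows "v \<in> (\<lambda>u. mulx M i (unshift b i) *\<^sub>v u) ` carrier_vec (dimf M (unshift b i))"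
  using assms(2-4)
proof (induction arbitrary: i)
  case (base v)
  then show ?case by simp
next
  case (zero a)
  then have "mulx M i (unshift a i) \<in> carrier_mat (dimf M a) (dimf M (unshift a i))"
    by (intro graded_module_mulx_unshift_carrier[OF G])
  then show ?case
    by (intro image_eqI[of _ _ "0\<^sub>v (dimf M (unshift a i))"]) (auto simp: mult_mat_vec_zero_vec)
next
  case (add a v w)
  then obtain u1 u2 where u: "u1 \<in> carrier_vec (dimf M (unshift a i))" "v = mulx M i (unshift a i) *\<^sub>v u1"
    "u2 \<in> carrier_vec (dimf M (unshift a i))" "w = mulx M i (unshift a i) *\<^sub>v u2" by blast
  have "mulx M i (unshift a i) \<in> carrier_mat (dimf M a) (dimf M (unshift a i))"
    using gen0_carrier[OF G add(1)] add.prems by (intro graded_module_mulx_unshift_carrier[OF G]) auto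
  then show ?case using u by (intro image_eqI[of _ _ "u1 + u2"]) (auto simp: mult_add_distrib_mat_vec)
next
  case (smult a v c)
  then obtain u where u: "u \<in> carrier_vec (dimf M (unshift a i))" "v = mulx M i (unshift a i) *\<^sub>v u"
    by blast
  have "mulx M i (unshift a i) \<in> carrier_mat (dimf M a) (dimf M (unshift a i))"
    using gen0_carrier[OF G smult(1)] smult.prems by (intro graded_module_mulx_unshift_carrier[OF G]) auto
  then show ?case using u by (intro image_eqI[of _ _ "c \<cdot>\<^sub>v u"]) (auto simp: mult_mat_vec)
next
  case (mult a v j)
  have a: "a \<in> degrees n" and v: "v \<in> carrier_vec (dimf M a)"
    using gen0_carrier[OF G mult.hyps(1)] by auto
  show ?case
  proof (cases "i = j")
    case True
    then show ?thesis using v by simp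
  next
    case False
    define p where "p = unshift a i"
    have ai: "a i \<noteq> 0" using mult.prems(2) False by (simp add: shift_apply)
    then obtain u where u: "u \<in> carrier_vec (dimf M p)" "v = mulx M i p *\<^sub>v u"
      using mult.IH[OF mult.prems(1)] unfolding p_def by blast
    have p: "p \<in> degrees n" "shift p i = a" using unshift_in_degrees[OF a] ai unfolding p_def by auto
    have "mulx M j a *\<^sub>v v = mulx M i (shift p j) *\<^sub>v (mulx M j p *\<^sub>v u)"
      using graded_module_mulx_commute_vec[OF G p(1) mult.prems(1) mult.hyps(2) u(1)] p(2) u(2)
      by simp
    moreover have "mulx M j p *\<^sub>v u \<in> carrier_vec (dimf M (shift p j))"
      using graded_module_mulx_carrier[OF G p(1) mult.hyps(2)] u(1) by simp
    ultimately show ?thesis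
      using unshift_shift_commute[OF False, of a] unfolding p_def by auto
  qed
qed

lemma dimf_shift_le:
  fixes M :: "'k::field grmod"
  assumes G: "graded_module n M" and Z: "generated_in_degree_zero n M"
    and a: "a \<in> degrees n" and i: "i < n"
  shows "dimf M (shift a i) \<le> dimf M a"
proof (rule surj_mult_mat_vec_imp_le[OF graded_module_mulx_carrier[OF G a i]], rule subsetI)
  fix w :: "'k vec" assume "w \<in> carrier_vec (dimf M (shift a i))"
  hence "gen0 n M (shift a i) w"
    using Z shift_in_degrees[OF a i] unfolding generated_in_degree_zero_def by blast
  from gen0_in_image_mulx[OF G this i]
  show "w \<in> (\<lambda>u. mulx M i a *\<^sub>v u) ` carrier_vec (dimf M a)" by (simp add: shift_apply)
qed

lemma dimf_shift_eq:
  fixes M :: "'k::field grmod"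
  assumes G: "graded_module n M" and S: "squarefree_mod n M"
    and a: "a \<in> degrees n" and i: "i < n" and ai: "a i \<noteq> 0"
  shows "dimf M (shift a i) = dimf M a"
  using bij_betw_mult_mat_vec_imp_eq[OF graded_module_mulx_carrier[OF G a i]] S a i ai
  unfolding squarefree_mod_def by simp

lemma dimf_antimono:
  fixes M :: "'k::field grmod"
  assumes G: "graded_module n M" and Z: "generated_in_degree_zero n M"
    and "a \<in> degrees n" "b \<in> degrees n" "a \<le> b"
  shows "dimf M b \<le> dimf M a"
  using assms(3-5)
proof (induction rule: interval_induct_degrees)
  case (step c i)
  then show ?case using dimf_shift_le[OF G Z, of c i] by simp
qed simp

lemma dimf_eq_if_supp_eq:
  fixes M :: "'k::field grmod"
  assumes G: "graded_module n M" and S: "squarefree_mod n M"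
    and a: "a \<in> degrees n" and b: "b \<in> degrees n" and ab: "supp a = supp b"
  shows "dimf M a = dimf M b"
proof -
  \<comment> \<open>Between two degrees of equal support no exponent ever leaves zero, so every
      multiplication map on the way is an isomorphism.\<close>
  have along: "dimf M c = dimf M d"
    if "c \<in> degrees n" "d \<in> degrees n" "c \<le> d" "supp c = supp d" for c d
    using that(1-3)
  proof (induction rule: interval_induct_degrees)
    case (step e i)
    have "d i \<noteq> 0" using le_funD[OF step.hyps(4), of i] by (simp add: shift_apply)
    hence "c i \<noteq> 0" using that(4) unfolding supp_def by blast
    hence "e i \<noteq> 0" using le_funD[OF step.hyps(3), of i] by simp
    then show ?case using dimf_shift_eq[OF G S step.hyps(1,2)] step.IH by simp
  qed simp
  have "inf a b \<in> degrees n" "supp (inf a b) = supp a" "supp (inf a b) = supp b"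
    using a ab unfolding degrees_def supp_def by (auto simp: set_eq_iff inf_min)
  with along[of "inf a b" a] along[of "inf a b" b] a b show ?thesis by simp
qed

definition level_complex :: "nat \<Rightarrow> 'k grmod \<Rightarrow> nat \<Rightarrow> nat set set" where
  "level_complex n M t = {supp a |a. a \<in> degrees n \<and> t \<le> dimf M a}"

lemma SR_dim_level_complex:
  fixes M :: "'k::field grmod"
  assumes G: "graded_module n M" and S: "squarefree_mod n M" and a: "a \<in> degrees n"
  shows "SR_dim n (level_complex n M t) a = (if t \<le> dimf M a then 1 else 0)"
proof -
  have "supp a \<in> level_complex n M t \<longleftrightarrow> t \<le> dimf M a"
  proof
    assume "supp a \<in> level_complex n M t"
    then obtain b where "supp a = supp b" "b \<in> degrees n" "t \<le> dimf M b"
      unfolding level_complex_def by blast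
    thus "t \<le> dimf M a" using dimf_eq_if_supp_eq[OF G S a] by simp
  qed (use a in \<open>auto simp: level_complex_def\<close>)
  thus ?thesis using a unfolding SR_dim_def by simp
qed

lemma simplicial_complex_level_complex:
  fixes M :: "'k::field grmod"
  assumes G: "graded_module n M" and Z: "generated_in_degree_zero n M"
    and t: "t \<le> dimf M (\<lambda>_. 0)"
  shows "simplicial_complex n (level_complex n M t)"
  unfolding simplicial_complex_def
proof (intro conjI ballI allI impI)
  show "level_complex n M t \<noteq> {}" using t zero_in_degrees unfolding level_complex_def by blast
next
  fix F assume "F \<in> level_complex n M t"
  then obtain a where "F = supp a" "a \<in> degrees n" unfolding level_complex_def by blast
  thus "F \<subseteq> {0..<n}" unfolding supp_def degrees_def by (auto intro: ccontr)
next
  fix F H assume F: "F \<in> level_complex n M t" and HF: "H \<subseteq> F"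
  then obtain b where b: "F = supp b" "b \<in> degrees n" "t \<le> dimf M b"
    unfolding level_complex_def by blast
  define a where "a j = (if j \<in> H then b j else 0)" for j
  have a: "a \<in> degrees n" "a \<le> b" "supp a = H"
    using b(1,2) HF unfolding a_def degrees_def supp_def le_fun_def by auto
  with dimf_antimono[OF G Z a(1) b(2)] b(3) show "H \<in> level_complex n M t"
    unfolding level_complex_def by force
qed

lemma sum_indicator_le_atLeastAtMost: "x \<le> d \<Longrightarrow> (\<Sum>t = 1..d. if t \<le> x then 1 else 0 :: nat) = x"
  by (induction d) (auto simp: le_Suc_eq)

lemma hilb_eq_sum_level_complex:
  fixes M :: "'k::field grmod"
  assumes G: "graded_module n M" and S: "squarefree_mod n M" and Z: "generated_in_degree_zero n M"
  shows "hilb n M = (\<lambda>i. \<Sum>t = 1..dimf M (\<lambda>_. 0). hilb n (stanley_reisner n (level_complex n M t) :: 'k grmod) i)"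
proof
  fix i
  let ?d = "dimf M (\<lambda>_. 0)" and ?A = "{a \<in> degrees n. (\<Sum>j<n. a j) = i}"
  have "dimf M a = (\<Sum>t = 1..?d. SR_dim n (level_complex n M t) a)" if "a \<in> ?A" for a
  proof -
    have "dimf M a \<le> ?d" using that dimf_antimono[OF G Z zero_in_degrees] by (simp add: le_fun_def)
    hence "dimf M a = (\<Sum>t = 1..?d. if t \<le> dimf M a then 1 else 0)"
      by (rule sum_indicator_le_atLeastAtMost[symmetric])
    also have "\<dots> = (\<Sum>t = 1..?d. SR_dim n (level_complex n M t) a)"
      using that SR_dim_level_complex[OF G S] by simp
    finally show ?thesis .
  qed
  hence "(\<Sum>a\<in>?A. dimf M a) = (\<Sum>a\<in>?A. \<Sum>t = 1..?d. SR_dim n (level_complex n M t) a)"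
    by (rule sum.cong[OF refl])
  also have "\<dots> = (\<Sum>t = 1..?d. \<Sum>a\<in>?A. SR_dim n (level_complex n M t) a)"
    by (rule sum.swap)
  finally have "(\<Sum>a\<in>?A. dimf M a) = (\<Sum>t = 1..?d. \<Sum>a\<in>?A. SR_dim n (level_complex n M t) a)" .
  thus "hilb n M i = (\<Sum>t = 1..?d. hilb n (stanley_reisner n (level_complex n M t) :: 'k grmod) i)"
    unfolding hilb_def stanley_reisner_def by simp
qed

section \<open>Stanley--Reisner rings\<close>

lemma dimf_stanley_reisner [simp]: "dimf (stanley_reisner n \<Delta>) = SR_dim n \<Delta>"
  unfolding stanley_reisner_def by simp

lemma SR_dim_cases: "SR_dim n \<Delta> a = 0 \<or> SR_dim n \<Delta> a = 1"
  unfolding SR_dim_def by simp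

lemma SR_dim_downward_closed:
  assumes "simplicial_complex n \<Delta>" "SR_dim n \<Delta> b = 1" "a \<in> degrees n" "supp a \<subseteq> supp b"
  shows "SR_dim n \<Delta> a = 1"
  using assms unfolding SR_dim_def simplicial_complex_def by (auto split: if_splits)

lemma SR_dim_shiftD: "SR_dim n \<Delta> (shift a i) = 1 \<Longrightarrow> simplicial_complex n \<Delta> \<Longrightarrow> SR_dim n \<Delta> a = 1"
  by (rule SR_dim_downward_closed) (auto simp: SR_dim_def supp_shift dest: shift_in_degreesD split: if_splits)

lemma mulx_stanley_reisner_carrier:
  "mulx (stanley_reisner n \<Delta> :: 'k::field grmod) i a
     \<in> carrier_mat (SR_dim n \<Delta> (shift a i)) (SR_dim n \<Delta> a)"
  unfolding stanley_reisner_def by auto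

lemma mulx_stanley_reisner_eq_one_mat:
  assumes "SR_dim n \<Delta> (shift a i) = SR_dim n \<Delta> a"
  shows "mulx (stanley_reisner n \<Delta> :: 'k::field grmod) i a = 1\<^sub>m (SR_dim n \<Delta> a)"
  \<comment> \<open>in dimension zero because \<open>0\<^sub>m 0 0 = 1\<^sub>m 0\<close>\<close>
  using assms SR_dim_cases[of n \<Delta> a] unfolding stanley_reisner_def
  by auto

lemma graded_module_stanley_reisner:
  assumes \<Delta>: "simplicial_complex n \<Delta>"
  shows "graded_module n (stanley_reisner n \<Delta> :: 'k::field grmod)"
  unfolding graded_module_def
proof (intro conjI ballI allI impI)
  fix a i assume "a \<in> degrees n" "i < n"
  show "mulx (stanley_reisner n \<Delta> :: 'k grmod) i a
      \<in> carrier_mat (dimf (stanley_reisner n \<Delta> :: 'k grmod) (shift a i)) (dimf (stanley_reisner n \<Delta> :: 'k grmod) a)"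
    using mulx_stanley_reisner_carrier by simp
next
  fix a i j assume "a \<in> degrees n" "i < n" "j < n"
  let ?s = "SR_dim n \<Delta>" and ?X = "mulx (stanley_reisner n \<Delta> :: 'k grmod)"
  have L: "?X j (shift a i) * ?X i a \<in> carrier_mat (?s (shift (shift a i) j)) (?s a)"
    by (rule mult_carrier_mat[OF mulx_stanley_reisner_carrier mulx_stanley_reisner_carrier])
  have R: "?X i (shift a j) * ?X j a \<in> carrier_mat (?s (shift (shift a i) j)) (?s a)"
    unfolding shift_commute[of a i j]
    by (rule mult_carrier_mat[OF mulx_stanley_reisner_carrier mulx_stanley_reisner_carrier])
  show "?X j (shift a i) * ?X i a = ?X i (shift a j) * ?X j a"
  proof (cases "?s a = 1 \<and> ?s (shift (shift a i) j) = 1")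
    case True
    hence "?s (shift (shift a j) i) = 1" by (simp add: shift_commute[of a i j])
    with True have "?s (shift a i) = 1" "?s (shift a j) = 1"
      using SR_dim_shiftD[OF _ \<Delta>] by blast+
    with True \<open>?s (shift (shift a j) i) = 1\<close> show ?thesis
      by (simp add: mulx_stanley_reisner_eq_one_mat)
  next
    case False
    hence "?s (shift (shift a i) j) = 0 \<or> ?s a = 0"
      using SR_dim_cases[of n \<Delta> a] SR_dim_cases[of n \<Delta> "shift (shift a i) j"] by auto
    with L R show ?thesis by (rule carrier_mat_degenerate_eq)
  qed
qed

lemma squarefree_mod_stanley_reisner:
  "squarefree_mod n (stanley_reisner n \<Delta> :: 'k::field grmod)"
  unfolding squarefree_mod_def
proof (intro ballI allI impI)
  fix a i assume "a \<in> degrees n" "i < n" "a i \<noteq> 0"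
  moreover have "supp (shift a i) = supp a"
    using \<open>a i \<noteq> 0\<close> unfolding supp_shift by (auto simp: supp_def)
  ultimately have "SR_dim n \<Delta> (shift a i) = SR_dim n \<Delta> a"
    using shift_in_degreesD[of a i n] shift_in_degrees[of a n i] by (auto simp: SR_dim_def)
  moreover have "bij_betw (\<lambda>v. 1\<^sub>m d *\<^sub>v v) (carrier_vec d) (carrier_vec d :: 'k vec set)" for d
    by (simp add: bij_betw_def inj_on_def image_def)
  ultimately show "bij_betw (\<lambda>v. mulx (stanley_reisner n \<Delta> :: 'k grmod) i a *\<^sub>v v)
      (carrier_vec (dimf (stanley_reisner n \<Delta> :: 'k grmod) a))
      (carrier_vec (dimf (stanley_reisner n \<Delta> :: 'k grmod) (shift a i)))"
    by (simp add: mulx_stanley_reisner_eq_one_mat)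
qed

lemma generated_in_degree_zero_stanley_reisner:
  assumes \<Delta>: "simplicial_complex n \<Delta>"
  shows "generated_in_degree_zero n (stanley_reisner n \<Delta> :: 'k::field grmod)"
  unfolding generated_in_degree_zero_def
proof (intro ballI)
  fix a and v :: "'k vec"
  assume a: "a \<in> degrees n" and v: "v \<in> carrier_vec (dimf (stanley_reisner n \<Delta> :: 'k grmod) a)"
  have "(\<lambda>_. 0) \<le> a" by (simp add: le_fun_def)
  from zero_in_degrees a this
  have "\<forall>v \<in> carrier_vec (SR_dim n \<Delta> a). gen0 n (stanley_reisner n \<Delta> :: 'k grmod) a v"
  proof (induction rule: interval_induct_degrees)
    case base
    show ?case by (auto intro: gen0.base)
  next
    case (step c i)
    show ?case
    proof
      fix w :: "'k vec" assume w: "w \<in> carrier_vec (SR_dim n \<Delta> (shift c i))"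
      show "gen0 n (stanley_reisner n \<Delta>) (shift c i) w"
      proof (cases "SR_dim n \<Delta> (shift c i) = 0")
        case True
        with w have "w = 0\<^sub>v (dimf (stanley_reisner n \<Delta> :: 'k grmod) (shift c i))"
          by (metis carrier_vecD dimf_stanley_reisner vec_of_dim_0)
        with gen0.zero[OF shift_in_degrees[OF step.hyps(1,2)], of "stanley_reisner n \<Delta> :: 'k grmod"]
        show ?thesis by simp
      next
        case False
        hence "SR_dim n \<Delta> (shift c i) = 1" "SR_dim n \<Delta> c = 1"
          using SR_dim_cases SR_dim_shiftD[OF _ \<Delta>] by metis+
        hence "w = mulx (stanley_reisner n \<Delta> :: 'k grmod) i c *\<^sub>v w"
          using w by (simp add: mulx_stanley_reisner_eq_one_mat)
        moreover have "gen0 n (stanley_reisner n \<Delta>) c w"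
          using step.IH w \<open>SR_dim n \<Delta> (shift c i) = 1\<close> \<open>SR_dim n \<Delta> c = 1\<close> by simp
        ultimately show ?thesis by (metis gen0.mult step.hyps(2))
      qed
    qed
  qed
  with v show "gen0 n (stanley_reisner n \<Delta>) a v" by simp
qed

lemma hilb_in_cone_span_stanley_reisner:
  fixes M :: "'k::field grmod"
  assumes G: "graded_module n M" and S: "squarefree_mod n M" and Z: "generated_in_degree_zero n M"
  shows "hilb n M \<in> cone_span {hilb n (stanley_reisner n \<Delta> :: 'k grmod) | \<Delta>. simplicial_complex n \<Delta>}"
  unfolding hilb_eq_sum_level_complex[OF G S Z]
proof (intro cone_span_sum cone_span_base CollectI exI conjI)
  fix t assume "t \<in> {1..dimf M (\<lambda>_. 0)}"
  then show "simplicial_complex n (level_complex n M t)"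
    by (intro simplicial_complex_level_complex[OF G Z]) simp
qed (rule refl | simp)+

theorem corollary4p12:
  fixes n :: nat
  shows "cone_span {hilb n M | M :: 'k::field grmod.
            graded_module n M \<and> squarefree_mod n M \<and> generated_in_degree_zero n M}
       = cone_span {hilb n (stanley_reisner n \<Delta> :: 'k grmod) | \<Delta>. simplicial_complex n \<Delta>}"
    (is "cone_span ?A = cone_span ?B")
proof (rule antisym)
  have "?A \<subseteq> cone_span ?B"
    using hilb_in_cone_span_stanley_reisner by blast
  from cone_span_mono[OF this] show "cone_span ?A \<subseteq> cone_span ?B"
    by (simp only: cone_span_idem)
  have "?B \<subseteq> ?A"
  proof
    fix h assume "h \<in> ?B"
    then obtain \<Delta> where h: "h = hilb n (stanley_reisner n \<Delta> :: 'k grmod)"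
      and \<Delta>: "simplicial_complex n \<Delta>" by blast
    show "h \<in> ?A"
      unfolding h using graded_module_stanley_reisner[OF \<Delta>] squarefree_mod_stanley_reisner
        generated_in_degree_zero_stanley_reisner[OF \<Delta>] by blast
  qed
  then show "cone_span ?B \<subseteq> cone_span ?A" by (rule cone_span_mono)
qed

end
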